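(* Assume additionally that $K$ is nonincreasing on $[0,\infty)$ (as for the uniform, Epanechnikov, triangle, tricube, biweight kernels), and that the ABC normalizing constant $Z=\iint\pi(\theta)p(x\mid\theta)K_\varepsilon(\Delta(x,y))dx\,d\theta$ is positive. Let $a\in[0,1)$ and let $h=h_a:\Theta\to\mathbb{R}$ be a discrepancy function such that $$\sup_{\theta\in\Theta_1\setminus\mathcal{N}_{\Theta_1}}\int p(x\mid\theta)\,\mathbb{I}\big(\Delta(x,y)\le h(\theta)\big)\,dx\le a$$ for some Lebesgue-null subset $\mathcal{N}_{\Theta_1}\subset\Theta_1$, where $\Theta_1=\{\theta:\pi_\varepsilon(\theta\mid y)>0\}$, and such that the normalizing constant of $\hat\pi_\varepsilon$ is positive. Then the $L_1$ distance $D_{L_1}(\hat\pi_\varepsilon(\cdot\mid y),\pi_\varepsilon(\cdot\mid y))=\int|\hat\pi_\varepsilon(\theta\mid y)-\pi_\varepsilon(\theta\mid y)|d\theta$ between the ejMCMC target marginal and the ABC posterior tends to $0$ as $a\to 0$ (uniformly over all such families $h_a$).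
   Context: Setting: $\theta\in\Theta\subset\mathbb{R}^p$ with prior density $\pi$; data density $p(x\mid\theta)$; observed data $y$; discrepancy $\Delta(x,y)\ge0$; $K$ a centered kernel density with maximum at $0$ and $K(z)=0$ for $z>1$, $K_\varepsilon(u)=K(u/\varepsilon)/K(0)$, tolerance $\varepsilon>0$. ABC posterior: $\pi_\varepsilon(\theta\mid y)\propto\pi(\theta)\int p(x\mid\theta)K_\varepsilon(\Delta(x,y))dx$. ejMCMC target marginal: $\hat\pi_\varepsilon(\theta\mid y)\propto\pi(\theta)\int p(x\mid\theta)\min\{K_\varepsilon(\Delta(x,y)),K_\varepsilon(h(\theta))\}dx$ (each normalized to integrate to 1 over $\Theta$). *)

theory Defs
  imports "HOL-Analysis.Analysis"
begin

definition Keps :: "(real \<Rightarrow> real) \<Rightarrow> real \<Rightarrow> real \<Rightarrow> real" where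
  "Keps K eps u = K (u / eps) / K 0"

definition abc_unnorm ::
  "('a::euclidean_space \<Rightarrow> real) \<Rightarrow> ('a \<Rightarrow> 'b::euclidean_space \<Rightarrow> real) \<Rightarrow>
   (real \<Rightarrow> real) \<Rightarrow> real \<Rightarrow> ('b \<Rightarrow> 'b \<Rightarrow> real) \<Rightarrow> 'b \<Rightarrow> 'a \<Rightarrow> real" where
  "abc_unnorm prior p K eps \<Delta> y \<theta> =
     prior \<theta> * (\<integral>x. p \<theta> x * Keps K eps (\<Delta> x y) \<partial>lborel)"

definition ej_unnorm ::
  "('a::euclidean_space \<Rightarrow> real) \<Rightarrow> ('a \<Rightarrow> 'b::euclidean_space \<Rightarrow> real) \<Rightarrow>
   (real \<Rightarrow> real) \<Rightarrow> real \<Rightarrow> ('b \<Rightarrow> 'b \<Rightarrow> real) \<Rightarrow> 'b \<Rightarrow> ('a \<Rightarrow> real) \<Rightarrow> 'a \<Rightarrow> real" where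
  "ej_unnorm prior p K eps \<Delta> y h \<theta> =
     prior \<theta> * (\<integral>x. p \<theta> x * min (Keps K eps (\<Delta> x y)) (Keps K eps (h \<theta>)) \<partial>lborel)"

definition normalize_on :: "'a::euclidean_space set \<Rightarrow> ('a \<Rightarrow> real) \<Rightarrow> 'a \<Rightarrow> real" where
  "normalize_on \<Theta> f \<theta> = f \<theta> / (\<integral>t\<in>\<Theta>. f t \<partial>lborel)"

definition abc_post where
  "abc_post \<Theta> prior p K eps \<Delta> y = normalize_on \<Theta> (abc_unnorm prior p K eps \<Delta> y)"

definition ej_post where
  "ej_post \<Theta> prior p K eps \<Delta> y h = normalize_on \<Theta> (ej_unnorm prior p K eps \<Delta> y h)"

definition L1_dist :: "'a::euclidean_space set \<Rightarrow> ('a \<Rightarrow> real) \<Rightarrow> ('a \<Rightarrow> real) \<Rightarrow> real" where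
  "L1_dist \<Theta> f g = (\<integral>t\<in>\<Theta>. \<bar>f t - g t\<bar> \<partial>lborel)"

end

theory Submission
  imports Defs
begin

text \<open>Replacing K_eps(Delta) by min{K_eps(Delta), K_eps(h(theta))} changes the integrand only where
  Delta \<le> h(theta), because K_eps is nonincreasing, and there by at most one since 0 \<le> K_eps \<le> 1.
  So the unnormalised ABC and ejMCMC densities f and g satisfy 0 \<le> f - g \<le> a prior off the
  exceptional null set (trivially where f vanishes), hence their normalisers Z \<ge> W satisfy
  Z - W \<le> a. For 0 \<le> g \<le> f the L1 distance of the normalised densities is at most
  2(Z - W)/Z, which gives the bound 2a/Z, uniform in h.\<close>

lemma integrable_mult_unit_bounded:
  fixes q g :: "'a \<Rightarrow> real"
  assumes "integrable M q" "g \<in> borel_measurable M" "\<And>x. \<bar>g x\<bar> \<le> 1"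
  shows "integrable M (\<lambda>x. q x * g x)"
  using assms by (intro Bochner_Integration.integrable_bound[OF assms(1)])
    (auto simp: abs_mult intro!: mult_left_le)

lemma set_integrable_of_set_integral_nonzero:
  fixes f :: "'a \<Rightarrow> real"
  assumes "(\<integral>x\<in>A. f x \<partial>M) \<noteq> 0"
  shows "set_integrable M A f"
  using assms not_integrable_integral_eq
  unfolding set_integrable_def set_lebesgue_integral_def by blast

lemma L1_dist_normalize_on_le:
  fixes f g :: "'a::euclidean_space \<Rightarrow> real"
  assumes f_int: "set_integrable lborel \<Theta> f" and g_int: "set_integrable lborel \<Theta> g"
    and g_nonneg: "\<And>\<theta>. \<theta> \<in> \<Theta> \<Longrightarrow> 0 \<le> g \<theta>"
    and g_le_f: "\<And>\<theta>. \<theta> \<in> \<Theta> \<Longrightarrow> g \<theta> \<le> f \<theta>"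
    and W_pos: "0 < (\<integral>\<theta>\<in>\<Theta>. g \<theta> \<partial>lborel)"
  shows "L1_dist \<Theta> (normalize_on \<Theta> g) (normalize_on \<Theta> f)
           \<le> 2 * ((\<integral>\<theta>\<in>\<Theta>. f \<theta> \<partial>lborel) - (\<integral>\<theta>\<in>\<Theta>. g \<theta> \<partial>lborel)) / (\<integral>\<theta>\<in>\<Theta>. f \<theta> \<partial>lborel)"
proof -
  define W where "W = (\<integral>\<theta>\<in>\<Theta>. g \<theta> \<partial>lborel)"
  define Z where "Z = (\<integral>\<theta>\<in>\<Theta>. f \<theta> \<partial>lborel)"
  have "W \<le> Z" unfolding W_def Z_def by (rule set_integral_mono[OF g_int f_int g_le_f])
  with W_pos have W: "0 < W" "W \<le> Z" by (simp_all add: W_def)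
  \<comment> \<open>the first summand is the rescaling error of g, the second the mass lost in passing from f to g\<close>
  have pointwise: "\<bar>g \<theta> / W - f \<theta> / Z\<bar> \<le> g \<theta> * (1 / W - 1 / Z) + (f \<theta> - g \<theta>) / Z"
    if "\<theta> \<in> \<Theta>" for \<theta>
  proof -
    have "g \<theta> / W - f \<theta> / Z = g \<theta> * (1 / W - 1 / Z) - (f \<theta> - g \<theta>) / Z"
      by (simp add: right_diff_distrib diff_divide_distrib)
    moreover have "0 \<le> g \<theta> * (1 / W - 1 / Z)"
      using g_nonneg[OF that] W by (intro mult_nonneg_nonneg) (auto simp: field_simps)
    moreover have "0 \<le> (f \<theta> - g \<theta>) / Z" using g_le_f[OF that] W by simp
    ultimately show ?thesis by linarith
  qed
  have "L1_dist \<Theta> (normalize_on \<Theta> g) (normalize_on \<Theta> f) = (\<integral>\<theta>\<in>\<Theta>. \<bar>g \<theta> / W - f \<theta> / Z\<bar> \<partial>lborel)"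
    by (simp add: L1_dist_def normalize_on_def W_def Z_def)
  also have "\<dots> \<le> (\<integral>\<theta>\<in>\<Theta>. g \<theta> * (1 / W - 1 / Z) + (f \<theta> - g \<theta>) / Z \<partial>lborel)"
    using f_int g_int pointwise
    by (intro set_integral_mono set_integrable_abs set_integral_add(1) set_integral_diff(1)
        set_integrable_divide set_integrable_mult_left) auto
  also have "\<dots> = W * (1 / W - 1 / Z) + (Z - W) / Z"
    using g_int f_int by (simp add: set_integral_add(2) set_integral_diff set_integrable_divide W_def Z_def)
  also have "\<dots> = 2 * (Z - W) / Z" using W by (simp add: field_simps)
  finally show ?thesis by (simp add: W_def Z_def)
qed

lemma uniform_smallness_from_linear_bound:
  fixes L :: "real \<Rightarrow> 'h \<Rightarrow> real"
  assumes "0 < C" and "\<And>a h. 0 \<le> a \<Longrightarrow> Q a h \<Longrightarrow> L a h \<le> C * a"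
  shows "\<forall>e>0. \<exists>\<delta>>0. \<forall>a h. 0 \<le> a \<and> a < 1 \<and> a < \<delta> \<and> Q a h \<longrightarrow> L a h < e"
proof (intro allI impI)
  fix e :: real assume "0 < e"
  show "\<exists>\<delta>>0. \<forall>a h. 0 \<le> a \<and> a < 1 \<and> a < \<delta> \<and> Q a h \<longrightarrow> L a h < e"
  proof (intro exI[of _ "e / C"] conjI allI impI)
    fix a h assume H: "0 \<le> a \<and> a < 1 \<and> a < e / C \<and> Q a h"
    then have "L a h \<le> C * a" using assms(2) by blast
    also have "\<dots> < e" using H \<open>0 < C\<close> by (simp add: pos_less_divide_eq mult.commute)
    finally show "L a h < e" .
  qed (use \<open>0 < e\<close> \<open>0 < C\<close> in simp)
qed

locale nonincreasing_kernel =
  fixes K :: "real \<Rightarrow> real" and eps :: real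
  assumes K_meas: "K \<in> borel_measurable borel"
    and K_nonneg: "\<And>z. 0 \<le> K z"
    and K_max: "\<And>z. K z \<le> K 0"
    and K_noninc: "\<And>u v. 0 \<le> u \<Longrightarrow> u \<le> v \<Longrightarrow> K v \<le> K u"
    and eps_pos: "0 < eps"
begin

lemma Keps_nonneg: "0 \<le> Keps K eps u"
  unfolding Keps_def using K_nonneg by simp

lemma Keps_le_one: "Keps K eps u \<le> 1"
proof (cases "K 0 = 0")
  case False
  then have "0 < K 0" using K_nonneg[of 0] by simp
  then show ?thesis using K_max[of "u / eps"] by (simp add: Keps_def)
qed (simp add: Keps_def)

lemma Keps_antimono: "0 \<le> v \<Longrightarrow> v \<le> u \<Longrightarrow> Keps K eps u \<le> Keps K eps v"
  unfolding Keps_def using eps_pos K_nonneg[of 0]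
  by (intro divide_right_mono K_noninc) auto

lemma Keps_measurable [measurable]:
  "d \<in> borel_measurable M \<Longrightarrow> (\<lambda>x. Keps K eps (d x)) \<in> borel_measurable M"
  unfolding Keps_def by (intro borel_measurable_divide measurable_compose[OF _ K_meas]) auto

lemma Keps_minus_min_le_indicator:
  assumes "0 \<le> c"
  shows "Keps K eps t - min (Keps K eps t) (Keps K eps c) \<le> indicator {..c} t"
proof (cases "t \<le> c")
  case True
  then show ?thesis using Keps_nonneg[of c] Keps_le_one[of t] by (simp add: min_def)
next
  case False
  then have "Keps K eps t \<le> Keps K eps c" using assms by (intro Keps_antimono) auto
  then show ?thesis using False by simp
qed

lemma integral_Keps_minus_min_bounds:
  fixes q d :: "'a::euclidean_space \<Rightarrow> real"
  assumes q_int: "integrable lborel q" and q_nonneg: "\<And>x. 0 \<le> q x"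
    and d_meas: "d \<in> borel_measurable lborel" and c: "0 \<le> c"
  defines "gap \<equiv> (\<integral>x. q x * Keps K eps (d x) \<partial>lborel)
                  - (\<integral>x. q x * min (Keps K eps (d x)) (Keps K eps c) \<partial>lborel)"
  shows "0 \<le> gap" "gap \<le> (\<integral>x. q x * indicator {x. d x \<le> c} x \<partial>lborel)"
proof -
  have int_Keps: "integrable lborel (\<lambda>x. q x * Keps K eps (d x))"
    using d_meas Keps_nonneg Keps_le_one by (intro integrable_mult_unit_bounded[OF q_int]) auto
  have int_min: "integrable lborel (\<lambda>x. q x * min (Keps K eps (d x)) (Keps K eps c))"
    using d_meas Keps_nonneg Keps_le_one
    by (intro integrable_mult_unit_bounded[OF q_int]) (auto simp: min_le_iff_disj)
  have gap_eq: "gap = (\<integral>x. q x * (Keps K eps (d x) - min (Keps K eps (d x)) (Keps K eps c)) \<partial>lborel)"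
    unfolding gap_def by (simp add: Bochner_Integration.integral_diff[OF int_Keps int_min] algebra_simps)
  have int_gap: "integrable lborel (\<lambda>x. q x * (Keps K eps (d x) - min (Keps K eps (d x)) (Keps K eps c)))"
    using int_Keps int_min by (simp add: right_diff_distrib)
  show "0 \<le> gap" unfolding gap_eq using q_nonneg by (intro integral_nonneg_AE) auto
  have "{x. d x \<le> c} \<in> sets lborel" using d_meas by measurable
  then have "integrable lborel (\<lambda>x. q x * indicator {x. d x \<le> c} x)"
    by (rule integrable_real_mult_indicator[OF _ q_int])
  moreover have "q x * (Keps K eps (d x) - min (Keps K eps (d x)) (Keps K eps c))
      \<le> q x * indicator {x. d x \<le> c} x" for x
    using Keps_minus_min_le_indicator[OF c, of "d x"] q_nonneg[of x]
    by (intro mult_left_mono) (auto simp: indicator_def)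
  ultimately show "gap \<le> (\<integral>x. q x * indicator {x. d x \<le> c} x \<partial>lborel)"
    unfolding gap_eq by (intro integral_mono[OF int_gap])
qed

end

locale abc_model = nonincreasing_kernel K eps for K eps +
  fixes \<Theta> :: "'a::euclidean_space set" and prior :: "'a \<Rightarrow> real"
    and p :: "'a \<Rightarrow> 'b::euclidean_space \<Rightarrow> real" and \<Delta> :: "'b \<Rightarrow> 'b \<Rightarrow> real" and y :: 'b
  assumes prior_nonneg: "\<And>\<theta>. \<theta> \<in> \<Theta> \<Longrightarrow> 0 \<le> prior \<theta>"
    and prior_int: "set_integrable lborel \<Theta> prior"
    and prior_one: "(\<integral>\<theta>\<in>\<Theta>. prior \<theta> \<partial>lborel) = 1"
    and p_nonneg: "\<And>\<theta> x. \<theta> \<in> \<Theta> \<Longrightarrow> 0 \<le> p \<theta> x"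
    and p_int: "\<And>\<theta>. \<theta> \<in> \<Theta> \<Longrightarrow> integrable lborel (p \<theta>)"
    and Delta_meas: "(\<lambda>x. \<Delta> x y) \<in> borel_measurable lborel"
    and Z_pos: "0 < (\<integral>\<theta>\<in>\<Theta>. abc_unnorm prior p K eps \<Delta> y \<theta> \<partial>lborel)"
begin

lemma set_integrable_abc_unnorm: "set_integrable lborel \<Theta> (abc_unnorm prior p K eps \<Delta> y)"
  using Z_pos by (intro set_integrable_of_set_integral_nonzero) simp

lemma ej_unnorm_nonneg: "\<theta> \<in> \<Theta> \<Longrightarrow> 0 \<le> ej_unnorm prior p K eps \<Delta> y h \<theta>"
  unfolding ej_unnorm_def using prior_nonneg p_nonneg Keps_nonneg
  by (intro mult_nonneg_nonneg integral_nonneg_AE) auto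

lemma abc_unnorm_minus_ej_unnorm_bounds:
  assumes "\<theta> \<in> \<Theta>" and h_nonneg: "0 \<le> h \<theta>"
  shows "0 \<le> abc_unnorm prior p K eps \<Delta> y \<theta> - ej_unnorm prior p K eps \<Delta> y h \<theta>"
    and "abc_unnorm prior p K eps \<Delta> y \<theta> - ej_unnorm prior p K eps \<Delta> y h \<theta>
           \<le> prior \<theta> * (\<integral>x. p \<theta> x * indicator {x. \<Delta> x y \<le> h \<theta>} x \<partial>lborel)"
proof -
  note gap = integral_Keps_minus_min_bounds
    [OF p_int[OF \<open>\<theta> \<in> \<Theta>\<close>] p_nonneg[OF \<open>\<theta> \<in> \<Theta>\<close>] Delta_meas h_nonneg]
  have diff: "abc_unnorm prior p K eps \<Delta> y \<theta> - ej_unnorm prior p K eps \<Delta> y h \<theta>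
      = prior \<theta> * ((\<integral>x. p \<theta> x * Keps K eps (\<Delta> x y) \<partial>lborel)
          - (\<integral>x. p \<theta> x * min (Keps K eps (\<Delta> x y)) (Keps K eps (h \<theta>)) \<partial>lborel))"
    unfolding abc_unnorm_def ej_unnorm_def by (simp add: right_diff_distrib)
  show "0 \<le> abc_unnorm prior p K eps \<Delta> y \<theta> - ej_unnorm prior p K eps \<Delta> y h \<theta>"
    unfolding diff using prior_nonneg[OF \<open>\<theta> \<in> \<Theta>\<close>] gap(1) by simp
  show "abc_unnorm prior p K eps \<Delta> y \<theta> - ej_unnorm prior p K eps \<Delta> y h \<theta>
      \<le> prior \<theta> * (\<integral>x. p \<theta> x * indicator {x. \<Delta> x y \<le> h \<theta>} x \<partial>lborel)"
    unfolding diff using prior_nonneg[OF \<open>\<theta> \<in> \<Theta>\<close>] gap(2) by (rule mult_left_mono[rotated])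
qed

lemma abc_unnorm_minus_ej_unnorm_le_prior:
  assumes "\<theta> \<in> \<Theta>" and a_nonneg: "0 \<le> a" and h_nonneg: "\<And>\<theta>. 0 \<le> h \<theta>"
    and acceptance_le: "abc_post \<Theta> prior p K eps \<Delta> y \<theta> > 0 \<Longrightarrow>
                          (\<integral>x. p \<theta> x * indicator {x. \<Delta> x y \<le> h \<theta>} x \<partial>lborel) \<le> a"
  shows "abc_unnorm prior p K eps \<Delta> y \<theta> - ej_unnorm prior p K eps \<Delta> y h \<theta> \<le> a * prior \<theta>"
proof -
  note bounds = abc_unnorm_minus_ej_unnorm_bounds[OF \<open>\<theta> \<in> \<Theta>\<close> h_nonneg]
  show ?thesis
  proof (cases "abc_post \<Theta> prior p K eps \<Delta> y \<theta> > 0")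
    case True
    have "abc_unnorm prior p K eps \<Delta> y \<theta> - ej_unnorm prior p K eps \<Delta> y h \<theta>
        \<le> prior \<theta> * (\<integral>x. p \<theta> x * indicator {x. \<Delta> x y \<le> h \<theta>} x \<partial>lborel)"
      by (rule bounds(2))
    also have "\<dots> \<le> prior \<theta> * a"
      using acceptance_le[OF True] prior_nonneg[OF \<open>\<theta> \<in> \<Theta>\<close>] by (rule mult_left_mono)
    finally show ?thesis by (simp add: mult.commute)
  next
    case False
      then have "abc_unnorm prior p K eps \<Delta> y \<theta> \<le> 0"
      using Z_pos by (simp add: abc_post_def normalize_on_def zero_less_divide_iff)
    moreover have "0 \<le> ej_unnorm prior p K eps \<Delta> y h \<theta>"
      using \<open>\<theta> \<in> \<Theta>\<close> by (rule ej_unnorm_nonneg)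
    moreover have "0 \<le> a * prior \<theta>"
      using a_nonneg prior_nonneg[OF \<open>\<theta> \<in> \<Theta>\<close>] by simp
    ultimately show ?thesis by linarith
  qed
qed

lemma normalizer_gap_le:
  assumes a_nonneg: "0 \<le> a" and h_nonneg: "\<And>\<theta>. 0 \<le> h \<theta>"
    and N_null: "N \<in> null_sets lborel"
    and acceptance_le: "\<And>\<theta>. \<theta> \<in> \<Theta> \<Longrightarrow> abc_post \<Theta> prior p K eps \<Delta> y \<theta> > 0 \<Longrightarrow> \<theta> \<notin> N \<Longrightarrow>
                          (\<integral>x. p \<theta> x * indicator {x. \<Delta> x y \<le> h \<theta>} x \<partial>lborel) \<le> a"
    and ej_int: "set_integrable lborel \<Theta> (ej_unnorm prior p K eps \<Delta> y h)"
  shows "(\<integral>\<theta>\<in>\<Theta>. abc_unnorm prior p K eps \<Delta> y \<theta> \<partial>lborel)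
           - (\<integral>\<theta>\<in>\<Theta>. ej_unnorm prior p K eps \<Delta> y h \<theta> \<partial>lborel) \<le> a"
proof -
  have pointwise: "abc_unnorm prior p K eps \<Delta> y \<theta> - ej_unnorm prior p K eps \<Delta> y h \<theta> \<le> a * prior \<theta>"
    if "\<theta> \<in> \<Theta>" "\<theta> \<notin> N" for \<theta>
    using that acceptance_le by (intro abc_unnorm_minus_ej_unnorm_le_prior[OF that(1) a_nonneg h_nonneg])
  have "(\<integral>\<theta>\<in>\<Theta>. abc_unnorm prior p K eps \<Delta> y \<theta> \<partial>lborel)
          - (\<integral>\<theta>\<in>\<Theta>. ej_unnorm prior p K eps \<Delta> y h \<theta> \<partial>lborel)
      = (\<integral>\<theta>\<in>\<Theta>. abc_unnorm prior p K eps \<Delta> y \<theta> - ej_unnorm prior p K eps \<Delta> y h \<theta> \<partial>lborel)"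
    by (simp add: set_integral_diff(2)[OF set_integrable_abc_unnorm ej_int])
  also have "\<dots> \<le> (\<integral>\<theta>\<in>\<Theta>. a * prior \<theta> \<partial>lborel)"
    using set_integrable_abc_unnorm ej_int prior_int AE_not_in[OF N_null] pointwise
    by (intro set_integral_mono_AE set_integral_diff(1)) (auto elim!: eventually_mono)
  also have "\<dots> = a" using prior_one by simp
  finally show ?thesis .
qed

lemma L1_dist_ej_post_abc_post_le:
  assumes a_nonneg: "0 \<le> a" and h_nonneg: "\<And>\<theta>. 0 \<le> h \<theta>"
    and N_null: "N \<in> null_sets lborel"
    and acceptance_le: "\<And>\<theta>. \<theta> \<in> \<Theta> \<Longrightarrow> abc_post \<Theta> prior p K eps \<Delta> y \<theta> > 0 \<Longrightarrow> \<theta> \<notin> N \<Longrightarrow>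
                          (\<integral>x. p \<theta> x * indicator {x. \<Delta> x y \<le> h \<theta>} x \<partial>lborel) \<le> a"
    and W_pos: "0 < (\<integral>\<theta>\<in>\<Theta>. ej_unnorm prior p K eps \<Delta> y h \<theta> \<partial>lborel)"
  shows "L1_dist \<Theta> (ej_post \<Theta> prior p K eps \<Delta> y h) (abc_post \<Theta> prior p K eps \<Delta> y)
           \<le> 2 / (\<integral>\<theta>\<in>\<Theta>. abc_unnorm prior p K eps \<Delta> y \<theta> \<partial>lborel) * a"
proof -
  define Z where "Z = (\<integral>\<theta>\<in>\<Theta>. abc_unnorm prior p K eps \<Delta> y \<theta> \<partial>lborel)"
  define W where "W = (\<integral>\<theta>\<in>\<Theta>. ej_unnorm prior p K eps \<Delta> y h \<theta> \<partial>lborel)"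
  have ej_int: "set_integrable lborel \<Theta> (ej_unnorm prior p K eps \<Delta> y h)"
    using W_pos by (intro set_integrable_of_set_integral_nonzero) simp
  have "L1_dist \<Theta> (ej_post \<Theta> prior p K eps \<Delta> y h) (abc_post \<Theta> prior p K eps \<Delta> y) \<le> 2 * (Z - W) / Z"
    unfolding ej_post_def abc_post_def Z_def W_def
    using set_integrable_abc_unnorm ej_int ej_unnorm_nonneg W_pos
      abc_unnorm_minus_ej_unnorm_bounds(1)[OF _ h_nonneg]
    by (intro L1_dist_normalize_on_le) auto
  also have "\<dots> \<le> 2 / Z * a"
    using normalizer_gap_le[OF a_nonneg h_nonneg N_null acceptance_le ej_int] Z_pos
    by (simp add: Z_def W_def divide_right_mono)
  finally show ?thesis by (simp add: Z_def)
qed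

end

theorem proposition2:
  fixes \<Theta> :: "'a::euclidean_space set"
    and prior :: "'a \<Rightarrow> real"
    and p :: "'a \<Rightarrow> 'b::euclidean_space \<Rightarrow> real"
    and K :: "real \<Rightarrow> real"
    and \<Delta> :: "'b \<Rightarrow> 'b \<Rightarrow> real"
    and y :: 'b
    and eps :: real
  assumes Theta_meas: "\<Theta> \<in> sets lborel"
    and prior_nonneg: "\<And>\<theta>. \<theta> \<in> \<Theta> \<Longrightarrow> 0 \<le> prior \<theta>"
    and prior_meas: "prior \<in> borel_measurable lborel"
    and prior_int: "set_integrable lborel \<Theta> prior"
    and prior_one: "(\<integral>\<theta>\<in>\<Theta>. prior \<theta> \<partial>lborel) = 1"
    and p_meas: "(\<lambda>(\<theta>, x). p \<theta> x) \<in> borel_measurable (lborel \<Otimes>\<^sub>M lborel)"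
    and p_nonneg: "\<And>\<theta> x. \<theta> \<in> \<Theta> \<Longrightarrow> 0 \<le> p \<theta> x"
    and p_int: "\<And>\<theta>. \<theta> \<in> \<Theta> \<Longrightarrow> integrable lborel (p \<theta>)"
    and p_one: "\<And>\<theta>. \<theta> \<in> \<Theta> \<Longrightarrow> (\<integral>x. p \<theta> x \<partial>lborel) = 1"
    and Delta_nonneg: "\<And>x z. 0 \<le> \<Delta> x z"
    and Delta_meas: "(\<lambda>x. \<Delta> x y) \<in> borel_measurable lborel"
    and K_meas: "K \<in> borel_measurable borel"
    and K_nonneg: "\<And>z. 0 \<le> K z"
    and K_int: "integrable lborel K"
    and K_one: "(\<integral>z. K z \<partial>lborel) = 1"
    and K_centered: "integrable lborel (\<lambda>z. z * K z)" "(\<integral>z. z * K z \<partial>lborel) = 0"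
    and K_max: "\<And>z. K z \<le> K 0"
    and K_supp: "\<And>z. z > 1 \<Longrightarrow> K z = 0"
    and K_noninc: "\<And>u v. 0 \<le> u \<Longrightarrow> u \<le> v \<Longrightarrow> K v \<le> K u"
    and eps_pos: "eps > 0"
    and Z_pos: "(\<integral>\<theta>\<in>\<Theta>. abc_unnorm prior p K eps \<Delta> y \<theta> \<partial>lborel) > 0"
  shows "\<forall>e>0. \<exists>\<delta>>0. \<forall>(a::real) (h::'a \<Rightarrow> real).
           0 \<le> a \<and> a < 1 \<and> a < \<delta>
           \<and> h \<in> borel_measurable lborel
           \<and> (\<forall>\<theta>. 0 \<le> h \<theta>)
           \<and> (\<exists>N. N \<in> null_sets lborel
                  \<and> N \<subseteq> {\<theta>\<in>\<Theta>. abc_post \<Theta> prior p K eps \<Delta> y \<theta> > 0}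
                  \<and> (\<forall>\<theta>\<in>{\<theta>\<in>\<Theta>. abc_post \<Theta> prior p K eps \<Delta> y \<theta> > 0} - N.
                       (\<integral>x. p \<theta> x * indicator {x. \<Delta> x y \<le> h \<theta>} x \<partial>lborel) \<le> a))
           \<and> (\<integral>\<theta>\<in>\<Theta>. ej_unnorm prior p K eps \<Delta> y h \<theta> \<partial>lborel) > 0
           \<longrightarrow> L1_dist \<Theta> (ej_post \<Theta> prior p K eps \<Delta> y h) (abc_post \<Theta> prior p K eps \<Delta> y) < e"
proof -
  interpret abc_model K eps \<Theta> prior p \<Delta> y
    using K_meas K_nonneg K_max K_noninc eps_pos prior_nonneg prior_int prior_one p_nonneg p_int
      Delta_meas Z_pos
    by unfold_locales
  show ?thesis
    by (intro uniform_smallness_from_linear_bound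
        [where C = "2 / (\<integral>\<theta>\<in>\<Theta>. abc_unnorm prior p K eps \<Delta> y \<theta> \<partial>lborel)"])
      (use Z_pos in simp, elim conjE exE, rule L1_dist_ej_post_abc_post_le, auto)
qed

end
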